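(* For each integer $n\ge1$, let $g_n(x)=(1+x^2)^{-n}$ and $\widehat{g_n}(\omega)=\int_{\mathbb R}g_n(x)e^{i\omega x}dx$. Then $$K_n:=\int_0^\infty\omega^3|\widehat{g_n}(\omega)|^2\,d\omega=\frac{2\pi^2n^2}{16^n}\binom{2n-1}{n}\binom{2n+1}{n}.$$ *)

theory Defs
  imports "HOL-Analysis.Analysis"
begin

definition g :: "nat \<Rightarrow> real \<Rightarrow> real" where
  "g n x = 1 / (1 + x\<^sup>2) ^ n"

definition ghat :: "nat \<Rightarrow> real \<Rightarrow> complex" where
  "ghat n \<omega> = integral UNIV (\<lambda>x. complex_of_real (g n x) * exp (\<i> * complex_of_real (\<omega> * x)))"

end

theory Submission
  imports
    Defs
    "HOL-Probability.Characteristic_Functions"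
    "HOL-Probability.Sinc_Integral"
    "HOL-Real_Asymp.Real_Asymp"
begin

text \<open>
  Since (1 + x^2)^-n = \<Gamma>(n)^-1 \<integral>_0^\<infinity> u^(n-1) e^(-(1+x^2)u) du and the Fourier transform
  of e^(-u x^2) is sqrt(\<pi>/u) e^(-\<omega>^2/(4u)), the transform of g_n is the positive integral
  sqrt(\<pi>)/(n-1)! \<integral>_0^\<infinity> u^(n-3/2) e^(-u-\<omega>^2/(4u)) du. Squaring it gives a double integral
  over (u, v); the moment \<integral>_0^\<infinity> \<omega>^3 e^(-a\<omega>^2) d\<omega> = 1/(2a^2) with a = (u+v)/(4uv)
  leaves a factor (u+v)^-2 = \<integral>_0^\<infinity> l e^(-(u+v)l) dl, after which the u- and v-integrals
  separate into Gamma integrals. This yields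
  K_n = 8\<pi> \<Gamma>(n+3/2)^2 / ((n-1)!^2 (2n+1)(2n+2)), and the binomial form follows from
  \<Gamma>(k+1/2) 4^k k! = (2k)! sqrt(\<pi>). All integrands are nonnegative, so Tonelli's theorem
  justifies every change in the order of integration.
\<close>

section \<open>Gamma integrals\<close>

definition gamma_kernel :: "real \<Rightarrow> real \<Rightarrow> real \<Rightarrow> real" where
  "gamma_kernel a c u = indicator {0<..} u * u powr (a - 1) * exp (- (c * u))"

lemma gamma_kernel_nonneg: "gamma_kernel a c u \<ge> 0"
  by (simp add: gamma_kernel_def)

lemma gamma_kernel_measurable [measurable]:
  fixes f h k :: "'a \<Rightarrow> real"
  assumes [measurable]: "f \<in> borel_measurable M" "h \<in> borel_measurable M" "k \<in> borel_measurable M"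
  shows "(\<lambda>x. gamma_kernel (f x) (h x) (k x)) \<in> borel_measurable M"
  unfolding gamma_kernel_def by measurable

lemma nn_integral_gamma_kernel:
  assumes a: "a > 0" and c: "c > 0"
  shows "(\<integral>\<^sup>+u. ennreal (gamma_kernel a c u) \<partial>lborel) = ennreal (Gamma a / c powr a)"
proof -
  have "ennreal (Gamma a) = (\<integral>\<^sup>+t. ennreal (indicator {0..} t * t powr (a - 1) / exp t) \<partial>lborel)"
    using Gamma_conv_nn_integral_real[OF a] .
  also have "\<dots> = ennreal c * (\<integral>\<^sup>+u. ennreal (indicator {0..} (0 + c * u) * (0 + c * u) powr (a - 1)
                                                 / exp (0 + c * u)) \<partial>lborel)"
    using c by (subst nn_integral_real_affine[where c = c and t = 0]) auto
  also have "\<dots> = ennreal c * (\<integral>\<^sup>+u. ennreal (c powr (a - 1)) * ennreal (gamma_kernel a c u) \<partial>lborel)"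
    using c
    by (intro arg_cong2[where f = "(*)"] refl nn_integral_cong)
       (auto simp: gamma_kernel_def indicator_def powr_mult ennreal_mult[symmetric] exp_minus
                   field_simps zero_le_mult_iff)
  also have "\<dots> = ennreal (c * c powr (a - 1)) * (\<integral>\<^sup>+u. ennreal (gamma_kernel a c u) \<partial>lborel)"
    using c by (subst nn_integral_cmult) (auto simp: ennreal_mult mult.assoc)
  also have "c * c powr (a - 1) = c powr a"
    using c by (simp add: powr_diff)
  finally have Gamma_eq: "ennreal (Gamma a) = ennreal (c powr a) * (\<integral>\<^sup>+u. ennreal (gamma_kernel a c u) \<partial>lborel)" .
  have "ennreal (Gamma a / c powr a) = ennreal (1 / c powr a) * ennreal (Gamma a)"
    using c a by (subst ennreal_mult[symmetric]) (auto intro: Gamma_real_pos less_imp_le)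
  also have "\<dots> = (\<integral>\<^sup>+u. ennreal (gamma_kernel a c u) \<partial>lborel)"
    using c by (simp add: Gamma_eq mult.assoc[symmetric] ennreal_mult[symmetric])
  finally show ?thesis ..
qed

lemma has_bochner_integral_gamma_kernel:
  assumes "a > 0" and "c > 0"
  shows "has_bochner_integral lborel (gamma_kernel a c) (Gamma a / c powr a)"
  using assms
  by (intro has_bochner_integral_nn_integral nn_integral_gamma_kernel)
     (auto intro!: divide_nonneg_nonneg less_imp_le[OF Gamma_real_pos] simp: gamma_kernel_nonneg)

lemma Gamma_of_nat: "n \<ge> 1 \<Longrightarrow> Gamma (real n) = fact (n - 1)"
  using Gamma_fact[of "n - 1", where 'a = real] by simp

lemma Gamma_nat_plus_half: "Gamma (real k + 1/2) * (4 ^ k * fact k) = fact (2 * k) * sqrt pi"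
proof (induction k)
  case 0
  then show ?case by (simp add: Gamma_one_half_real)
next
  case (Suc k)
  have "real k + 1/2 \<notin> \<int>\<^sub>\<le>\<^sub>0"
    using nonpos_Ints_nonpos by fastforce
  then have "Gamma (real (Suc k) + 1/2) = (real k + 1/2) * Gamma (real k + 1/2)"
    by (simp add: Gamma_plus1[symmetric] add_ac)
  then have "Gamma (real (Suc k) + 1/2) * (4 ^ Suc k * fact (Suc k))
             = (2 * real k + 1) * (2 * real k + 2) * (Gamma (real k + 1/2) * (4 ^ k * fact k))"
    by (simp add: algebra_simps)
  also have "\<dots> = fact (2 * Suc k) * sqrt pi"
    unfolding Suc.IH by (simp add: algebra_simps)
  finally show ?case .
qed

section \<open>Elementary integrals and Tonelli\<close>

lemma nn_integral_cube_exp_neg_square: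
  fixes a :: real
  assumes a: "a > 0"
  shows "(\<integral>\<^sup>+w. ennreal (w ^ 3 * exp (- (a * w\<^sup>2))) * indicator {0..} w \<partial>lborel) = ennreal (1 / (2 * a\<^sup>2))"
proof -
  define F where "F w = - (a * w\<^sup>2 + 1) * exp (- (a * w\<^sup>2)) / (2 * a\<^sup>2)" for w
  have "(\<integral>\<^sup>+w. ennreal (w ^ 3 * exp (- (a * w\<^sup>2))) * indicator {0..} w \<partial>lborel) = ennreal (0 - F 0)"
  proof (rule nn_integral_FTC_atLeast)
    fix w :: real assume w: "0 \<le> w"
    show "0 \<le> w ^ 3 * exp (- (a * w\<^sup>2))" using w by simp
    show "(F has_real_derivative w ^ 3 * exp (- (a * w\<^sup>2))) (at w)"
      unfolding F_def using a
      by (auto intro!: derivative_eq_intros simp: field_simps power2_eq_square power3_eq_cube)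
  next
    show "(F \<longlongrightarrow> 0) at_top" unfolding F_def using a by real_asymp
  qed auto
  also have "0 - F 0 = 1 / (2 * a\<^sup>2)" by (simp add: F_def)
  finally show ?thesis .
qed

lemma has_real_derivative_inverse_one_plus_power:
  fixes l :: real
  assumes "l > -1"
  shows "((\<lambda>l. inverse (1 + l) ^ Suc j / real (Suc j)) has_real_derivative (- (inverse (1 + l) ^ Suc (Suc j)))) (at l)"
  using assms
  by (auto intro!: derivative_eq_intros simp: divide_simps algebra_simps simp del: power_Suc of_nat_Suc,
      simp add: algebra_simps)

lemma nn_integral_x_div_one_plus_x_power:
  fixes k :: nat
  shows "(\<integral>\<^sup>+l. ennreal (l / (1 + l) ^ (k + 3)) * indicator {0..} l \<partial>lborel)
           = ennreal (1 / ((real k + 1) * (real k + 2)))"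
proof -
  define F where "F l = inverse (1 + l) ^ Suc (Suc k) / real (Suc (Suc k)) - inverse (1 + l) ^ Suc k / real (Suc k)"
    for l :: real
  have "(\<integral>\<^sup>+l. ennreal (l / (1 + l) ^ (k + 3)) * indicator {0..} l \<partial>lborel) = ennreal (0 - F 0)"
  proof (rule nn_integral_FTC_atLeast)
    fix l :: real assume l: "0 \<le> l"
    show "0 \<le> l / (1 + l) ^ (k + 3)" using l by simp
    have "(F has_real_derivative (- (inverse (1 + l) ^ Suc (Suc (Suc k))) - - (inverse (1 + l) ^ Suc (Suc k)))) (at l)"
      unfolding F_def using l by (intro DERIV_diff has_real_derivative_inverse_one_plus_power) auto
    moreover have "- (inverse (1 + l) ^ Suc (Suc (Suc k))) - - (inverse (1 + l) ^ Suc (Suc k)) = l / (1 + l) ^ (k + 3)"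
    proof -
      define t where "t = 1 + l"
      have "t > 0" using l by (simp add: t_def)
      then have "- (inverse t ^ Suc (Suc (Suc k))) - - (inverse t ^ Suc (Suc k)) = (t - 1) / t ^ (k + 3)"
        by (simp add: power_inverse eval_nat_numeral field_simps)
      then show ?thesis by (simp add: t_def)
    qed
    ultimately show "(F has_real_derivative l / (1 + l) ^ (k + 3)) (at l)" by simp
  next
    show "(F \<longlongrightarrow> 0) at_top" unfolding F_def by real_asymp
  qed auto
  also have "0 - F 0 = 1 / ((real k + 1) * (real k + 2))"
    by (simp add: F_def field_simps)
  finally show ?thesis .
qed

lemma fourier_transform_gaussian:
  fixes u \<omega> :: real
  assumes u: "u > 0"
  shows "(\<integral>x. complex_of_real (exp (- (u * x\<^sup>2))) * exp (\<i> * complex_of_real (\<omega> * x)) \<partial>lborel)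
         = complex_of_real (sqrt (pi / u) * exp (- (\<omega>\<^sup>2 / (4 * u))))"
proof -
  define s where "s = 1 / sqrt (2 * u)"
  have s: "s > 0" using u by (simp add: s_def)
  have s2: "s\<^sup>2 = 1 / (2 * u)" using u by (simp add: s_def power_divide)
  have char_normal: "(\<integral>y. std_normal_density y *\<^sub>R exp (\<i> * complex_of_real (t * y)) \<partial>lborel)
                     = complex_of_real (exp (- (t\<^sup>2) / 2))" for t
  proof -
    have "char std_normal_distribution t = complex_of_real (exp (- (t\<^sup>2) / 2))"
      by (simp add: char_std_normal_distribution)
    then show ?thesis
      unfolding char_def by (subst (asm) integral_density) (auto simp: normal_density_nonneg)
  qed
  have "(\<integral>x. complex_of_real (exp (- (u * x\<^sup>2))) * exp (\<i> * complex_of_real (\<omega> * x)) \<partial>lborel)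
      = \<bar>s\<bar> *\<^sub>R (\<integral>y. complex_of_real (exp (- (u * (0 + s * y)\<^sup>2))) * exp (\<i> * complex_of_real (\<omega> * (0 + s * y))) \<partial>lborel)"
    using s by (intro lborel_integral_real_affine) simp
  also have "(\<lambda>y. complex_of_real (exp (- (u * (0 + s * y)\<^sup>2))) * exp (\<i> * complex_of_real (\<omega> * (0 + s * y))))
      = (\<lambda>y. sqrt (2 * pi) *\<^sub>R (std_normal_density y *\<^sub>R exp (\<i> * complex_of_real ((\<omega> * s) * y))))"
  proof
    fix y
    have "u * (s * y)\<^sup>2 = y\<^sup>2 / 2" using s2 u by (simp add: power_mult_distrib field_simps)
    then show "complex_of_real (exp (- (u * (0 + s * y)\<^sup>2))) * exp (\<i> * complex_of_real (\<omega> * (0 + s * y)))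
      = sqrt (2 * pi) *\<^sub>R (std_normal_density y *\<^sub>R exp (\<i> * complex_of_real ((\<omega> * s) * y)))"
      by (simp add: std_normal_density_def scaleR_conv_of_real mult_ac)
  qed
  also have "\<bar>s\<bar> *\<^sub>R (\<integral>y. sqrt (2 * pi) *\<^sub>R (std_normal_density y *\<^sub>R exp (\<i> * complex_of_real ((\<omega> * s) * y))) \<partial>lborel)
      = complex_of_real ((s * sqrt (2 * pi)) * exp (- ((\<omega> * s)\<^sup>2) / 2))"
    using s by (simp only: integral_scaleR_right char_normal) (simp add: scaleR_conv_of_real)
  also have "s * sqrt (2 * pi) = sqrt (pi / u)"
    using u by (simp add: s_def real_sqrt_divide real_sqrt_mult)
  also have "- ((\<omega> * s)\<^sup>2) / 2 = - (\<omega>\<^sup>2 / (4 * u))"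
    using s2 u by (simp add: power_mult_distrib field_simps)
  finally show ?thesis .
qed

lemma nn_integral_product:
  fixes f :: "'a \<Rightarrow> real" and h :: "'b \<Rightarrow> real"
  assumes [measurable]: "f \<in> borel_measurable M" "h \<in> borel_measurable N"
    and "\<And>x. f x \<ge> 0" "\<And>y. h y \<ge> 0"
  shows "(\<integral>\<^sup>+x. \<integral>\<^sup>+y. ennreal (f x * h y) \<partial>N \<partial>M) = (\<integral>\<^sup>+x. ennreal (f x) \<partial>M) * (\<integral>\<^sup>+y. ennreal (h y) \<partial>N)"
proof -
  have "(\<integral>\<^sup>+x. \<integral>\<^sup>+y. ennreal (f x * h y) \<partial>N \<partial>M) = (\<integral>\<^sup>+x. ennreal (f x) * (\<integral>\<^sup>+y. ennreal (h y) \<partial>N) \<partial>M)"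
    using assms(3,4) by (intro nn_integral_cong) (simp add: ennreal_mult nn_integral_cmult)
  also have "\<dots> = (\<integral>\<^sup>+x. ennreal (f x) \<partial>M) * (\<integral>\<^sup>+y. ennreal (h y) \<partial>N)"
    by (rule nn_integral_multc) measurable
  finally show ?thesis .
qed

lemma lborel_nn_integral_rotate3:
  fixes f :: "real \<Rightarrow> real \<Rightarrow> real \<Rightarrow> ennreal"
  assumes "(\<lambda>p. f (fst (fst p)) (snd (fst p)) (snd p)) \<in> borel_measurable ((lborel \<Otimes>\<^sub>M lborel) \<Otimes>\<^sub>M lborel)"
    and "\<And>y. (\<lambda>p. f (fst p) y (snd p)) \<in> borel_measurable (lborel \<Otimes>\<^sub>M lborel)"
  shows "(\<integral>\<^sup>+x. \<integral>\<^sup>+y. \<integral>\<^sup>+z. f x y z \<partial>lborel \<partial>lborel \<partial>lborel)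
       = (\<integral>\<^sup>+y. \<integral>\<^sup>+z. \<integral>\<^sup>+x. f x y z \<partial>lborel \<partial>lborel \<partial>lborel)"
proof -
  have "(\<lambda>(x, y). \<integral>\<^sup>+z. f x y z \<partial>lborel) \<in> borel_measurable (lborel \<Otimes>\<^sub>M lborel)"
    using lborel.borel_measurable_nn_integral[of "\<lambda>xy z. f (fst xy) (snd xy) z" "lborel \<Otimes>\<^sub>M lborel"] assms(1)
    by (simp add: case_prod_beta' split_beta')
  then have "(\<integral>\<^sup>+x. \<integral>\<^sup>+y. \<integral>\<^sup>+z. f x y z \<partial>lborel \<partial>lborel \<partial>lborel)
           = (\<integral>\<^sup>+y. \<integral>\<^sup>+x. \<integral>\<^sup>+z. f x y z \<partial>lborel \<partial>lborel \<partial>lborel)"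
    by (intro lborel_pair.Fubini'[symmetric]) simp
  also have "\<dots> = (\<integral>\<^sup>+y. \<integral>\<^sup>+z. \<integral>\<^sup>+x. f x y z \<partial>lborel \<partial>lborel \<partial>lborel)"
    using assms(2) by (intro nn_integral_cong lborel_pair.Fubini'[symmetric]) simp
  finally show ?thesis .
qed

section \<open>The Fourier transform of g as a Gamma integral\<close>

lemma g_nonneg: "g n x \<ge> 0"
  by (simp add: g_def)

lemma g_measurable [measurable]: "g n \<in> borel_measurable borel"
  unfolding g_def[abs_def] by measurable

lemma g_le_inverse_one_plus_square:
  assumes "n \<ge> 1"
  shows "g n x \<le> inverse (1 + x\<^sup>2)"
proof -
  have "(1 + x\<^sup>2) ^ 1 \<le> (1 + x\<^sup>2) ^ n"
    using assms by (intro power_increasing) auto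
  then show ?thesis
    unfolding g_def inverse_eq_divide
    by (intro divide_left_mono) (auto intro!: mult_pos_pos add_pos_nonneg zero_less_power)
qed

lemma integrable_g: "n \<ge> 1 \<Longrightarrow> integrable lborel (g n)"
  using integrable_inverse_1_plus_square unfolding set_integrable_def
  by (rule Bochner_Integration.integrable_bound)
     (auto simp: g_nonneg g_le_inverse_one_plus_square)

lemma ghat_eq_lebesgue_integral:
  assumes "n \<ge> 1"
  shows "ghat n \<omega> = (\<integral>x. complex_of_real (g n x) * exp (\<i> * complex_of_real (\<omega> * x)) \<partial>lborel)"
proof -
  have "integrable lborel (\<lambda>x. complex_of_real (g n x) * exp (\<i> * complex_of_real (\<omega> * x)))"
    using integrable_g[OF assms] by (rule Bochner_Integration.integrable_bound) (auto simp: norm_mult g_nonneg)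
  then show ?thesis
    unfolding ghat_def by (rule integral_unique[OF has_integral_integral_lborel])
qed

lemma has_bochner_integral_gamma_kernel_eq_g:
  assumes n: "n \<ge> 1"
  shows "has_bochner_integral lborel (\<lambda>u. gamma_kernel (real n) (1 + x\<^sup>2) u / fact (n - 1)) (g n x)"
proof -
  have "has_bochner_integral lborel (\<lambda>u. gamma_kernel (real n) (1 + x\<^sup>2) u / fact (n - 1))
          (Gamma (real n) / (1 + x\<^sup>2) powr (real n) / fact (n - 1))"
    using n by (intro has_bochner_integral_divide_zero has_bochner_integral_gamma_kernel)
               (auto simp: add_pos_nonneg)
  also have "Gamma (real n) / (1 + x\<^sup>2) powr (real n) / fact (n - 1) = g n x"
    using n by (simp add: Gamma_of_nat powr_realpow add_pos_nonneg g_def)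
  finally show ?thesis .
qed

text \<open>The factor gamma_kernel vanishes for u \<le> 0, so the junk value of \<omega>^2/(4u) at u = 0 is harmless.\<close>
definition ghat_kernel :: "nat \<Rightarrow> real \<Rightarrow> real \<Rightarrow> real" where
  "ghat_kernel n \<omega> u = sqrt pi / fact (n - 1) * gamma_kernel (real n - 1/2) 1 u * exp (- (\<omega>\<^sup>2 / (4 * u)))"

lemma ghat_kernel_nonneg: "ghat_kernel n \<omega> u \<ge> 0"
  by (simp add: ghat_kernel_def gamma_kernel_nonneg)

lemma ghat_kernel_measurable [measurable]:
  fixes f h :: "'a \<Rightarrow> real"
  assumes [measurable]: "f \<in> borel_measurable M" "h \<in> borel_measurable M"
  shows "(\<lambda>x. ghat_kernel n (f x) (h x)) \<in> borel_measurable M"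
  unfolding ghat_kernel_def by measurable

lemma integrable_ghat_kernel:
  assumes "n \<ge> 1"
  shows "integrable lborel (ghat_kernel n \<omega>)"
proof (rule Bochner_Integration.integrable_bound)
  show "integrable lborel (\<lambda>u. sqrt pi / fact (n - 1) * gamma_kernel (real n - 1/2) 1 u)"
    using has_bochner_integral_gamma_kernel[of "real n - 1/2" 1] assms
    by (intro integrable_mult_right) (auto simp: integrable.intros)
  show "AE u in lborel. norm (ghat_kernel n \<omega> u) \<le> norm (sqrt pi / fact (n - 1) * gamma_kernel (real n - 1/2) 1 u)"
  proof (intro AE_I2)
    fix u :: real
    have "ghat_kernel n \<omega> u \<le> sqrt pi / fact (n - 1) * gamma_kernel (real n - 1/2) 1 u"
    proof (cases "u > 0")
      case True
      then have "exp (- (\<omega>\<^sup>2 / (4 * u))) \<le> 1" by simp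
      then show ?thesis
        unfolding ghat_kernel_def by (rule mult_left_le) (simp add: gamma_kernel_nonneg)
    qed (simp add: ghat_kernel_def gamma_kernel_def)
    then show "norm (ghat_kernel n \<omega> u) \<le> norm (sqrt pi / fact (n - 1) * gamma_kernel (real n - 1/2) 1 u)"
      by (simp add: ghat_kernel_nonneg gamma_kernel_nonneg)
  qed
qed simp

lemma fourier_transform_gamma_kernel:
  assumes "u > 0"
  shows "(\<integral>x. complex_of_real (gamma_kernel (real n) (1 + x\<^sup>2) u / fact (n - 1)) * exp (\<i> * complex_of_real (\<omega> * x)) \<partial>lborel)
         = complex_of_real (ghat_kernel n \<omega> u)"
proof -
  define B where "B = u powr (real n - 1) * exp (- u) / fact (n - 1)"
  have "gamma_kernel (real n) (1 + x\<^sup>2) u / fact (n - 1) = B * exp (- (u * x\<^sup>2))" for x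
    using assms by (simp add: gamma_kernel_def B_def algebra_simps exp_add[symmetric])
  then have "(\<integral>x. complex_of_real (gamma_kernel (real n) (1 + x\<^sup>2) u / fact (n - 1)) * exp (\<i> * complex_of_real (\<omega> * x)) \<partial>lborel)
      = (\<integral>x. complex_of_real B * (complex_of_real (exp (- (u * x\<^sup>2))) * exp (\<i> * complex_of_real (\<omega> * x))) \<partial>lborel)"
    by (simp only: of_real_mult mult.assoc)
  also have "\<dots> = complex_of_real B * (\<integral>x. complex_of_real (exp (- (u * x\<^sup>2))) * exp (\<i> * complex_of_real (\<omega> * x)) \<partial>lborel)"
    by (rule integral_mult_right_zero)
  also have "\<dots> = complex_of_real (B * (sqrt (pi / u) * exp (- (\<omega>\<^sup>2 / (4 * u)))))"
    by (subst fourier_transform_gaussian[OF assms]) (simp only: of_real_mult)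
  also have "B * (sqrt (pi / u) * exp (- (\<omega>\<^sup>2 / (4 * u)))) = ghat_kernel n \<omega> u"
  proof -
    have "sqrt (pi / u) = sqrt pi * u powr (- 1/2)"
      using assms by (simp add: real_sqrt_divide powr_minus_divide powr_half_sqrt)
    moreover have "u powr (real n - 1) * u powr (- 1/2) = u powr (real n - 1/2 - 1)"
      using assms by (simp add: powr_add[symmetric])
    ultimately show ?thesis
      using assms unfolding B_def ghat_kernel_def gamma_kernel_def by (simp add: field_simps)
  qed
  finally show ?thesis .
qed

lemma ghat_eq_integral_ghat_kernel:
  assumes n: "n \<ge> 1"
  shows "ghat n \<omega> = complex_of_real (\<integral>u. ghat_kernel n \<omega> u \<partial>lborel)"
proof -
  define F where "F x u = complex_of_real (gamma_kernel (real n) (1 + x\<^sup>2) u / fact (n - 1))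
                          * exp (\<i> * complex_of_real (\<omega> * x))" for x u
  have [measurable]: "(\<lambda>(x, u). F x u) \<in> borel_measurable (lborel \<Otimes>\<^sub>M lborel)"
    unfolding F_def by measurable
  have "integrable (lborel \<Otimes>\<^sub>M lborel) (\<lambda>(x, u). F x u)"
  proof (subst integrable_iff_bounded, intro conjI)
    have "(\<integral>\<^sup>+p. ennreal (norm (case p of (x, u) \<Rightarrow> F x u)) \<partial>(lborel \<Otimes>\<^sub>M lborel))
        = (\<integral>\<^sup>+x. \<integral>\<^sup>+u. ennreal (gamma_kernel (real n) (1 + x\<^sup>2) u / fact (n - 1)) \<partial>lborel \<partial>lborel)"
      by (subst lborel.nn_integral_fst[symmetric]) (auto simp: F_def norm_mult norm_divide gamma_kernel_nonneg)
    also have "\<dots> = (\<integral>\<^sup>+x. ennreal (g n x) \<partial>lborel)"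
    proof (intro nn_integral_cong)
      fix x
      show "(\<integral>\<^sup>+u. ennreal (gamma_kernel (real n) (1 + x\<^sup>2) u / fact (n - 1)) \<partial>lborel) = ennreal (g n x)"
        using has_bochner_integral_gamma_kernel_eq_g[OF n, of x]
        by (subst nn_integral_eq_integral) (auto simp: has_bochner_integral_iff gamma_kernel_nonneg)
    qed
    also have "\<dots> < \<infinity>"
      using integrable_g[OF n] by (subst nn_integral_eq_integral) (auto simp: g_nonneg)
    finally show "(\<integral>\<^sup>+p. ennreal (norm (case p of (x, u) \<Rightarrow> F x u)) \<partial>(lborel \<Otimes>\<^sub>M lborel)) < \<infinity>" .
  qed simp
  then have Fubini: "(\<integral>x. (\<integral>u. F x u \<partial>lborel) \<partial>lborel) = (\<integral>u. (\<integral>x. F x u \<partial>lborel) \<partial>lborel)"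
    by (rule lborel_pair.Fubini_integral[symmetric])
  have integral_u: "(\<integral>u. F x u \<partial>lborel) = complex_of_real (g n x) * exp (\<i> * complex_of_real (\<omega> * x))" for x
    unfolding F_def integral_mult_left_zero integral_complex_of_real
    using has_bochner_integral_gamma_kernel_eq_g[OF n, of x] by (simp only: has_bochner_integral_integral_eq)
  have integral_x: "(\<integral>x. F x u \<partial>lborel) = complex_of_real (ghat_kernel n \<omega> u)" for u
  proof (cases "u > 0")
    case True
    then show ?thesis unfolding F_def by (rule fourier_transform_gamma_kernel)
  qed (simp add: F_def gamma_kernel_def ghat_kernel_def)
  have "ghat n \<omega> = (\<integral>x. (\<integral>u. F x u \<partial>lborel) \<partial>lborel)"
    by (simp only: integral_u ghat_eq_lebesgue_integral[OF n])
  also have "\<dots> = (\<integral>u. complex_of_real (ghat_kernel n \<omega> u) \<partial>lborel)"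
    by (simp only: Fubini integral_x)
  finally show ?thesis by (simp only: integral_complex_of_real)
qed

section \<open>The moment integral\<close>

definition kernel_weight :: "nat \<Rightarrow> real \<Rightarrow> real \<Rightarrow> real" where
  "kernel_weight n u v = 8 * (sqrt pi / fact (n - 1))\<^sup>2 * (u * v) powr (real n + 1/2) * exp (- u - v)"

text \<open>
  Integrating over l gives kernel_weight n u v / (u+v)^2, because
  (u+v)^-2 = \<integral>_0^\<infinity> l e^(-(u+v)l) dl and gamma_kernel 2 0 l = l for l > 0; integrating over
  u and v instead gives a product of two Gamma integrals.
\<close>
definition decoupled_integrand :: "nat \<Rightarrow> real \<Rightarrow> real \<Rightarrow> real \<Rightarrow> real" where
  "decoupled_integrand n u v l = 8 * (sqrt pi / fact (n - 1))\<^sup>2 * gamma_kernel 2 0 l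
     * gamma_kernel (real n + 3/2) (1 + l) u * gamma_kernel (real n + 3/2) (1 + l) v"

lemma kernel_weight_nonneg: "kernel_weight n u v \<ge> 0"
  by (simp add: kernel_weight_def)

lemma decoupled_integrand_measurable [measurable]:
  fixes f h k :: "'a \<Rightarrow> real"
  assumes [measurable]: "f \<in> borel_measurable M" "h \<in> borel_measurable M" "k \<in> borel_measurable M"
  shows "(\<lambda>x. decoupled_integrand n (f x) (h x) (k x)) \<in> borel_measurable M"
  unfolding decoupled_integrand_def by measurable

lemma nn_integral_cube_ghat_kernel_product:
  assumes u: "u > 0" and v: "v > 0"
  shows "(\<integral>\<^sup>+\<omega>. ennreal (indicator {0..} \<omega> * \<omega> ^ 3 * ghat_kernel n \<omega> u * ghat_kernel n \<omega> v) \<partial>lborel)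
         = ennreal (kernel_weight n u v / (u + v)\<^sup>2)"
proof -
  define c where "c = sqrt pi / fact (n - 1)"
  define a where "a = 1 / (4 * u) + 1 / (4 * v)"
  define C where "C = c\<^sup>2 * (u * v) powr (real n - 3/2) * exp (- u - v)"
  have a: "a > 0" using u v unfolding a_def by (intro add_pos_pos) simp_all
  have C: "C \<ge> 0" by (simp add: C_def)
  have kernel: "ghat_kernel n \<omega> w = c * w powr (real n - 3/2) * exp (- w) * exp (- (\<omega>\<^sup>2 / (4 * w)))"
    if "w > 0" for w \<omega>
    using that by (simp add: ghat_kernel_def gamma_kernel_def c_def)
  have "indicator {0..} \<omega> * \<omega> ^ 3 * ghat_kernel n \<omega> u * ghat_kernel n \<omega> v
        = C * (\<omega> ^ 3 * exp (- (a * \<omega>\<^sup>2)) * indicator {0..} \<omega>)" for \<omega>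
  proof -
    have "exp (- u) * exp (- (\<omega>\<^sup>2 / (4 * u))) * (exp (- v) * exp (- (\<omega>\<^sup>2 / (4 * v))))
          = exp (- u - v) * exp (- (a * \<omega>\<^sup>2))"
      by (simp add: exp_add[symmetric] a_def field_simps)
    then show ?thesis
      using u v by (simp add: kernel C_def powr_mult power2_eq_square mult_ac)
  qed
  then have "(\<integral>\<^sup>+\<omega>. ennreal (indicator {0..} \<omega> * \<omega> ^ 3 * ghat_kernel n \<omega> u * ghat_kernel n \<omega> v) \<partial>lborel)
             = (\<integral>\<^sup>+\<omega>. ennreal C * (ennreal (\<omega> ^ 3 * exp (- (a * \<omega>\<^sup>2))) * indicator {0..} \<omega>) \<partial>lborel)"
    by (simp only: ennreal_mult'[OF C] ennreal_mult''[OF indicator_pos_le] ennreal_indicator)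
  also have "\<dots> = ennreal C * (\<integral>\<^sup>+\<omega>. ennreal (\<omega> ^ 3 * exp (- (a * \<omega>\<^sup>2))) * indicator {0..} \<omega> \<partial>lborel)"
    by (rule nn_integral_cmult) measurable
  also have "\<dots> = ennreal (C / (2 * a\<^sup>2))"
    using C by (simp add: nn_integral_cube_exp_neg_square[OF a] ennreal_mult[symmetric])
  also have "C / (2 * a\<^sup>2) = kernel_weight n u v / (u + v)\<^sup>2"
  proof -
    have "a = (u + v) / (4 * (u * v))"
      using u v by (simp add: a_def field_simps)
    moreover have "u + v \<noteq> 0" "u * v \<noteq> 0"
      using u v by simp_all
    ultimately have a2: "1 / (2 * a\<^sup>2) = 8 * (u * v)\<^sup>2 / (u + v)\<^sup>2"
      by (simp add: power_divide power_mult_distrib)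
    have powr_eq: "(u * v) powr (real n + 1/2) = (u * v) powr (real n - 3/2) * (u * v)\<^sup>2"
      using powr_add[of "u * v" "real n - 3/2" 2] u v by (simp add: powr_numeral add.commute)
    have "C / (2 * a\<^sup>2) = C * (8 * (u * v)\<^sup>2 / (u + v)\<^sup>2)"
      by (simp flip: a2)
    also have "\<dots> = kernel_weight n u v / (u + v)\<^sup>2"
      unfolding kernel_weight_def C_def c_def powr_eq by (simp add: mult_ac)
    finally show ?thesis .
  qed
  finally show ?thesis .
qed

lemma nn_integral_decoupled_integrand_over_l:
  assumes u: "u > 0" and v: "v > 0"
  shows "(\<integral>\<^sup>+l. ennreal (decoupled_integrand n u v l) \<partial>lborel) = ennreal (kernel_weight n u v / (u + v)\<^sup>2)"
proof -
  have "decoupled_integrand n u v l = kernel_weight n u v * gamma_kernel 2 (u + v) l" for l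
  proof (cases "l > 0")
    case True
    have kernel: "gamma_kernel (real n + 3/2) (1 + l) w = w powr (real n + 1/2) * exp (- w) * exp (- (w * l))"
      if "w > 0" for w
      using that by (simp add: gamma_kernel_def mult.assoc flip: exp_add) (simp add: algebra_simps)
    have "gamma_kernel 2 (u + v) l = l * exp (- (u * l)) * exp (- (v * l))"
      using True by (simp add: gamma_kernel_def mult.assoc flip: exp_add) (simp add: algebra_simps)
    with True u v show ?thesis
      by (simp add: decoupled_integrand_def kernel_weight_def kernel gamma_kernel_def powr_mult exp_diff
                    exp_minus field_simps)
  qed (simp add: decoupled_integrand_def gamma_kernel_def)
  then have "(\<integral>\<^sup>+l. ennreal (decoupled_integrand n u v l) \<partial>lborel)
             = ennreal (kernel_weight n u v) * (\<integral>\<^sup>+l. ennreal (gamma_kernel 2 (u + v) l) \<partial>lborel)"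
    by (simp add: ennreal_mult kernel_weight_nonneg gamma_kernel_nonneg nn_integral_cmult)
  also have "\<dots> = ennreal (kernel_weight n u v / (u + v)\<^sup>2)"
    using u v Gamma_of_nat[of 2]
    by (simp add: nn_integral_gamma_kernel kernel_weight_nonneg ennreal_mult[symmetric])
  finally show ?thesis .
qed

lemma nn_integral_decoupled_integrand_over_uv:
  "(\<integral>\<^sup>+u. \<integral>\<^sup>+v. ennreal (decoupled_integrand n u v l) \<partial>lborel \<partial>lborel)
   = ennreal (8 * (sqrt pi / fact (n - 1))\<^sup>2 * (Gamma (real n + 3/2))\<^sup>2)
     * (ennreal (l / (1 + l) ^ (2 * n + 3)) * indicator {0..} l)"
proof (cases "l > 0")
  case False
  then show ?thesis
    by (cases "l = 0") (auto simp: decoupled_integrand_def gamma_kernel_def)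
next
  case True
  define C where "C = 8 * (sqrt pi / fact (n - 1))\<^sup>2 * (Gamma (real n + 3/2))\<^sup>2"
  define k where "k = 8 * (sqrt pi / fact (n - 1))\<^sup>2 * l"
  define G where "G = Gamma (real n + 3/2) / (1 + l) powr (real n + 3/2)"
  have "C \<ge> 0" by (simp add: C_def)
  have k: "k \<ge> 0" using True by (simp add: k_def)
  have G: "G \<ge> 0" by (simp add: G_def less_imp_le)
  have "decoupled_integrand n u v l = (k * gamma_kernel (real n + 3/2) (1 + l) u) * gamma_kernel (real n + 3/2) (1 + l) v"
    for u v
    using True by (simp add: decoupled_integrand_def k_def gamma_kernel_def)
  then have "(\<integral>\<^sup>+u. \<integral>\<^sup>+v. ennreal (decoupled_integrand n u v l) \<partial>lborel \<partial>lborel)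
      = (\<integral>\<^sup>+u. ennreal (k * gamma_kernel (real n + 3/2) (1 + l) u) \<partial>lborel)
        * (\<integral>\<^sup>+v. ennreal (gamma_kernel (real n + 3/2) (1 + l) v) \<partial>lborel)"
    using k by (simp only:) (rule nn_integral_product, auto simp: gamma_kernel_nonneg)
  also have "\<dots> = ennreal (k * G * G)"
  proof -
    have "(\<integral>\<^sup>+u. ennreal (gamma_kernel (real n + 3/2) (1 + l) u) \<partial>lborel) = ennreal G"
      unfolding G_def using True by (intro nn_integral_gamma_kernel) auto
    then show ?thesis
      using k by (simp add: ennreal_mult' ennreal_mult''[OF G] nn_integral_cmult gamma_kernel_nonneg)
  qed
  also have "k * G * G = C * (l / (1 + l) ^ (2 * n + 3))"
  proof -
    have "(1 + l) powr (real n + 3/2) * (1 + l) powr (real n + 3/2) = (1 + l) ^ (2 * n + 3)"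
      using True by (simp add: powr_add[symmetric] powr_realpow[symmetric])
    then show ?thesis
      by (simp add: C_def k_def G_def power2_eq_square field_simps)
  qed
  finally show ?thesis
    unfolding C_def[symmetric] using True \<open>C \<ge> 0\<close> by (simp add: ennreal_mult'[symmetric])
qed

lemma nn_integral_cube_ghat_kernel_product_eq:
  "(\<integral>\<^sup>+\<omega>. ennreal (indicator {0..} \<omega> * \<omega> ^ 3 * ghat_kernel n \<omega> u * ghat_kernel n \<omega> v) \<partial>lborel)
   = (\<integral>\<^sup>+l. ennreal (decoupled_integrand n u v l) \<partial>lborel)"
proof (cases "u > 0 \<and> v > 0")
  case True
  then show ?thesis
    by (simp add: nn_integral_cube_ghat_kernel_product nn_integral_decoupled_integrand_over_l)
qed (auto simp: ghat_kernel_def decoupled_integrand_def gamma_kernel_def)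

lemma ennreal_integral_ghat_kernel:
  assumes "n \<ge> 1"
  shows "ennreal (\<integral>u. ghat_kernel n \<omega> u \<partial>lborel) = (\<integral>\<^sup>+u. ennreal (ghat_kernel n \<omega> u) \<partial>lborel)"
  using integrable_ghat_kernel[OF assms]
  by (subst nn_integral_eq_integral) (auto simp: ghat_kernel_nonneg)

lemma ennreal_cube_square_integral_ghat_kernel:
  assumes n: "n \<ge> 1"
  shows "ennreal (\<omega> ^ 3 * (\<integral>u. ghat_kernel n \<omega> u \<partial>lborel)\<^sup>2 * indicator {0..} \<omega>)
      = (\<integral>\<^sup>+u. \<integral>\<^sup>+v. ennreal (indicator {0..} \<omega> * \<omega> ^ 3 * ghat_kernel n \<omega> u * ghat_kernel n \<omega> v) \<partial>lborel \<partial>lborel)"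
proof -
  define a where "a = indicator {0..} \<omega> * \<omega> ^ 3"
  define H where "H = (\<integral>u. ghat_kernel n \<omega> u \<partial>lborel)"
  have a: "a \<ge> 0" by (simp add: a_def indicator_def)
  have H: "H \<ge> 0" by (simp add: H_def ghat_kernel_nonneg)
  have "(\<integral>\<^sup>+u. \<integral>\<^sup>+v. ennreal (a * ghat_kernel n \<omega> u * ghat_kernel n \<omega> v) \<partial>lborel \<partial>lborel)
      = (\<integral>\<^sup>+u. ennreal (a * ghat_kernel n \<omega> u) \<partial>lborel) * (\<integral>\<^sup>+v. ennreal (ghat_kernel n \<omega> v) \<partial>lborel)"
    using a by (intro nn_integral_product) (auto simp: ghat_kernel_nonneg)
  also have "\<dots> = ennreal (a * H * H)"
    using a H
    by (simp add: nn_integral_cmult ennreal_mult ghat_kernel_nonneg H_def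
                  ennreal_integral_ghat_kernel[OF n, symmetric])
  finally show ?thesis
    by (simp add: a_def H_def power2_eq_square mult_ac)
qed

lemma nn_integral_cube_square_integral_ghat_kernel:
  assumes n: "n \<ge> 1"
  shows "(\<integral>\<^sup>+\<omega>. ennreal (\<omega> ^ 3 * (\<integral>u. ghat_kernel n \<omega> u \<partial>lborel)\<^sup>2 * indicator {0..} \<omega>) \<partial>lborel)
         = ennreal (8 * (sqrt pi / fact (n - 1))\<^sup>2 * (Gamma (real n + 3/2))\<^sup>2
                    / ((2 * real n + 1) * (2 * real n + 2)))"
proof -
  define C where "C = 8 * (sqrt pi / fact (n - 1))\<^sup>2 * (Gamma (real n + 3/2))\<^sup>2"
  have "C \<ge> 0" by (simp add: C_def)
  have "(\<integral>\<^sup>+\<omega>. ennreal (\<omega> ^ 3 * (\<integral>u. ghat_kernel n \<omega> u \<partial>lborel)\<^sup>2 * indicator {0..} \<omega>) \<partial>lborel)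
      = (\<integral>\<^sup>+\<omega>. \<integral>\<^sup>+u. \<integral>\<^sup>+v. ennreal (indicator {0..} \<omega> * \<omega> ^ 3 * ghat_kernel n \<omega> u * ghat_kernel n \<omega> v)
            \<partial>lborel \<partial>lborel \<partial>lborel)"
    by (simp only: ennreal_cube_square_integral_ghat_kernel[OF n])
  also have "\<dots> = (\<integral>\<^sup>+u. \<integral>\<^sup>+v. \<integral>\<^sup>+\<omega>. ennreal (indicator {0..} \<omega> * \<omega> ^ 3 * ghat_kernel n \<omega> u * ghat_kernel n \<omega> v)
            \<partial>lborel \<partial>lborel \<partial>lborel)"
    by (rule lborel_nn_integral_rotate3) measurable
  also have "\<dots> = (\<integral>\<^sup>+u. \<integral>\<^sup>+v. \<integral>\<^sup>+l. ennreal (decoupled_integrand n u v l) \<partial>lborel \<partial>lborel \<partial>lborel)"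
    by (simp only: nn_integral_cube_ghat_kernel_product_eq)
  also have "\<dots> = (\<integral>\<^sup>+l. \<integral>\<^sup>+u. \<integral>\<^sup>+v. ennreal (decoupled_integrand n u v l) \<partial>lborel \<partial>lborel \<partial>lborel)"
    by (rule lborel_nn_integral_rotate3[where f = "\<lambda>l u v. ennreal (decoupled_integrand n u v l)", symmetric])
       measurable
  also have "\<dots> = (\<integral>\<^sup>+l. ennreal C * (ennreal (l / (1 + l) ^ (2 * n + 3)) * indicator {0..} l) \<partial>lborel)"
    by (simp only: nn_integral_decoupled_integrand_over_uv C_def)
  also have "\<dots> = ennreal C * (\<integral>\<^sup>+l. ennreal (l / (1 + l) ^ (2 * n + 3)) * indicator {0..} l \<partial>lborel)"
    by (rule nn_integral_cmult) measurable
  also have "\<dots> = ennreal (C / ((2 * real n + 1) * (2 * real n + 2)))"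
    using nn_integral_x_div_one_plus_x_power[of "2 * n"] \<open>C \<ge> 0\<close> by (simp add: ennreal_mult[symmetric])
  finally show ?thesis
    by (simp add: C_def)
qed

lemma moment_constant_closed_form:
  assumes "n \<ge> 1"
  shows "8 * (sqrt pi / fact (n - 1))\<^sup>2 * (Gamma (real n + 3/2))\<^sup>2 / ((2 * real n + 1) * (2 * real n + 2))
         = 2 * pi\<^sup>2 * (real n)\<^sup>2 / 16 ^ n * real ((2 * n - 1) choose n) * real ((2 * n + 1) choose n)"
proof -
  obtain m where m: "n = Suc m" using assms by (cases n) auto
  \<comment> \<open>With B = n + 1 and C = 2n + 1 kept atomic, the final identity is multiplicative,
    so field_simps never has to show that an expanded sum is nonzero.\<close>
  define N B C F f Q S
    where "N = real n" and "B = real n + 1" and "C = 2 * real n + 1"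
      and "F = (fact (2 * m + 1) :: real)" and "f = (fact m :: real)"
      and "Q = (4 :: real) ^ n" and "S = sqrt pi"
  have pos: "N > 0" "B > 0" "C > 0" "F > 0" "f > 0" "Q > 0" "S > 0"
    by (simp_all add: N_def B_def C_def F_def f_def Q_def S_def m)
  have fact_2Suc: "(fact (2 * Suc n) :: real) = (2 * B) * C * (2 * N) * F"
    by (simp add: N_def B_def C_def F_def m algebra_simps)
  have fact_Suc: "(fact (Suc n) :: real) = B * N * f"
    by (simp add: N_def B_def f_def m algebra_simps)
  have "Gamma (real n + 3/2) * (4 * Q * (B * N * f)) = (2 * B) * C * (2 * N) * F * S"
    using Gamma_nat_plus_half[of "Suc n"] unfolding fact_2Suc fact_Suc
    by (simp add: Q_def S_def add_ac)
  then have Gamma_eq: "Gamma (N + 3/2) = (2 * B) * C * (2 * N) * F * S / (4 * Q * (B * N * f))"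
    using pos by (simp add: N_def eq_divide_eq mult_ac)
  have binom_1: "real ((2 * n - 1) choose n) = F / (N * f * f)"
    unfolding m N_def B_def C_def F_def f_def by (subst binomial_fact) (auto simp: algebra_simps)
  have binom_2: "real ((2 * n + 1) choose n) = C * (2 * N) * F / (N * f * (B * N * f))"
    unfolding m N_def B_def C_def F_def f_def by (subst binomial_fact) (auto simp: algebra_simps)
  have rest: "2 * N + 1 = C" "2 * N + 2 = 2 * B" "fact (n - 1) = f" "(16 :: real) ^ n = Q * Q" "pi = S * S"
    by (simp_all add: N_def B_def C_def f_def m Q_def S_def flip: power_mult_distrib)
  show ?thesis
    unfolding N_def[symmetric] rest Gamma_eq binom_1 binom_2
    using pos by (simp add: field_simps power2_eq_square)
qed

theorem mainTheorem11:
  fixes n :: nat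
  assumes "n \<ge> 1"
  shows "((\<lambda>\<omega>::real. \<omega> ^ 3 * (cmod (ghat n \<omega>))\<^sup>2) has_integral
           (2 * pi\<^sup>2 * (real n)\<^sup>2 / 16 ^ n * real ((2*n - 1) choose n) * real ((2*n + 1) choose n)))
         {0..}"
proof -
  define H where "H \<omega> = (\<integral>u. ghat_kernel n \<omega> u \<partial>lborel)" for \<omega>
  have [measurable]: "H \<in> borel_measurable borel"
    unfolding H_def by measurable
  have "((\<lambda>\<omega>. \<omega> ^ 3 * (H \<omega>)\<^sup>2 * indicator {0..} \<omega>) has_integral
          (8 * (sqrt pi / fact (n - 1))\<^sup>2 * (Gamma (real n + 3/2))\<^sup>2 / ((2 * real n + 1) * (2 * real n + 2)))) UNIV"
    using nn_integral_cube_square_integral_ghat_kernel[OF assms]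
    by (intro nn_integral_has_integral) (auto simp: H_def indicator_def)
  also have "(\<lambda>\<omega>. \<omega> ^ 3 * (H \<omega>)\<^sup>2 * indicator {0..} \<omega>)
             = (\<lambda>\<omega>. if \<omega> \<in> {0..} then \<omega> ^ 3 * (cmod (ghat n \<omega>))\<^sup>2 else 0)"
    by (auto simp: ghat_eq_integral_ghat_kernel[OF assms] H_def indicator_def)
  finally show ?thesis
    unfolding has_integral_restrict_UNIV moment_constant_closed_form[OF assms] .
qed

end
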